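(* Let $0<p<1$ and $\alpha>-1$. For integers $k\ge1$ and $B$ with $1\le B\le k$, set $$p_{k+1}=1-\frac{(1-p)(k+\alpha B)}{k(1+\alpha p)+\alpha(1-p)}.$$ If $p\ge 1/2$, then $p_{k+1}\ge 0$ for all integers $k\ge 1$ and all integers $1\le B\le k$. If $p<1/2$, then $p_{k+1}\ge0$ for all integers $k\ge1$ and all integers $1\le B\le k$ if and only if $$\alpha\le \frac{p}{1-2p}.$$
   Context: This concerns the urn transfer process ($p_k$-model): urns $urn_1,urn_2,\dots$, $F_i(k)$ balls in $urn_i$ after $k$ steps, starting from a single ball in $urn_1$; at stage $k+1$ a new ball is added to $urn_1$ with probability $p_{k+1}=1-\frac{(1-p)\sum_i (i+\alpha)F_i(k)}{k(1+\alpha p)+\alpha(1-p)}$, otherwise a ball is moved from $urn_i$ to $urn_{i+1}$, $urn_i$ chosen with probability $\frac{(1-p)(i+\alpha)F_i(k)}{k(1+\alpha p)+\alpha(1-p)}$. Since $\sum_i iF_i(k)=k$, writing $B(k)=\sum_iF_i(k)$ (which satisfies $1\le B(k)\le k$) gives the formula for $p_{k+1}$ in the claim with $B=B(k)$; the process is well defined at stage $k+1$ exactly when $p_{k+1}\ge0$ (note $p_{k+1}<1$ always). *)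

theory Defs
  imports Complex_Main
begin

definition p_next :: "real \<Rightarrow> real \<Rightarrow> nat \<Rightarrow> nat \<Rightarrow> real" where
  "p_next p \<alpha> k B = 1 - ((1 - p) * (real k + \<alpha> * real B)) /
       (real k * (1 + \<alpha> * p) + \<alpha> * (1 - p))"

end

theory Submission
  imports Defs
begin

text \<open>Clearing the positive denominator, \<open>p\<^sub>k\<^sub>+\<^sub>1 \<ge> 0\<close> amounts to
  \<open>k p (1 + \<alpha>) - \<alpha> (1 - p) (B - 1) \<ge> 0\<close>. For \<open>\<alpha> \<le> 0\<close> this always holds, and for \<open>\<alpha> > 0\<close>
  the worst case is \<open>B = k\<close>. On this diagonal the numerator is affine in \<open>k\<close>, namely
  \<open>p (1 + \<alpha>) + (k - 1) (p - \<alpha> (1 - 2p))\<close>. Its value at \<open>k = 1\<close> is positive, so it stays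
  nonnegative for all \<open>k\<close> exactly when the slope \<open>p - \<alpha> (1 - 2p)\<close> is nonnegative. The slope is
  automatically positive for \<open>p \<ge> 1/2\<close>, and for \<open>p < 1/2\<close> it is nonnegative iff
  \<open>\<alpha> \<le> p / (1 - 2p)\<close>.\<close>

lemma affine_nonneg_on_nat_iff:
  fixes a c :: real
  assumes "0 \<le> a"
  shows "(\<forall>n::nat. 0 \<le> a + real n * c) \<longleftrightarrow> 0 \<le> c"
proof
  assume nonneg: "\<forall>n::nat. 0 \<le> a + real n * c"
  show "0 \<le> c"
  proof (rule ccontr)
    assume "\<not> 0 \<le> c"
    then have "c < 0" by simp
    obtain n :: nat where "a < real n * - c" using reals_Archimedean3[of "- c"] \<open>c < 0\<close> by auto
    then have "a + real n * c < 0" by simp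
    then show False using nonneg by (meson not_le)
  qed
qed (use assms in simp)

lemma p_next_denominator_pos:
  fixes p \<alpha> :: real
  assumes "0 < p" "p < 1" "\<alpha> > -1" "1 \<le> k"
  shows "real k * (1 + \<alpha> * p) + \<alpha> * (1 - p) > 0"
proof -
  have "1 + \<alpha> * p > 0"
  proof (cases "\<alpha> \<ge> 0")
    case False
    then have "\<alpha> * p > -1 * p" using assms by (intro mult_strict_right_mono) auto
    then show ?thesis using assms by linarith
  qed (use assms in \<open>simp add: add_pos_nonneg\<close>)
  then have "real k * (1 + \<alpha> * p) \<ge> 1 + \<alpha> * p"
    using assms by (simp add: mult_le_cancel_right1)
  then show ?thesis using assms by (simp add: algebra_simps)
qed

lemma p_next_nonneg_iff:
  fixes p \<alpha> :: real
  assumes "0 < p" "p < 1" "\<alpha> > -1" "1 \<le> k"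
  shows "p_next p \<alpha> k B \<ge> 0 \<longleftrightarrow> real k * p * (1 + \<alpha>) - \<alpha> * (1 - p) * (real B - 1) \<ge> 0"
proof -
  define D where "D = real k * (1 + \<alpha> * p) + \<alpha> * (1 - p)"
  have "D > 0" using p_next_denominator_pos[OF assms] by (simp add: D_def)
  moreover have "p_next p \<alpha> k B = (D - (1 - p) * (real k + \<alpha> * real B)) / D"
    using \<open>D > 0\<close> unfolding p_next_def D_def by (simp add: field_simps)
  moreover have "D - (1 - p) * (real k + \<alpha> * real B)
      = real k * p * (1 + \<alpha>) - \<alpha> * (1 - p) * (real B - 1)"
    unfolding D_def by (simp add: algebra_simps)
  ultimately show ?thesis by (simp add: zero_le_divide_iff)
qed

lemma p_next_diagonal_nonneg_iff:
  fixes p \<alpha> :: real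
  assumes "0 < p" "p < 1" "\<alpha> > -1" "1 \<le> k"
  shows "p_next p \<alpha> k k \<ge> 0 \<longleftrightarrow> p * (1 + \<alpha>) + (real k - 1) * (p - \<alpha> * (1 - 2 * p)) \<ge> 0"
proof -
  have numerator: "real k * p * (1 + \<alpha>) - \<alpha> * (1 - p) * (real k - 1)
      = p * (1 + \<alpha>) + (real k - 1) * (p - \<alpha> * (1 - 2 * p))"
    by (simp add: algebra_simps)
  show ?thesis unfolding p_next_nonneg_iff[OF assms] numerator ..
qed

lemma p_next_nonneg_of_diagonal:
  fixes p \<alpha> :: real
  assumes "0 < p" "p < 1" "\<alpha> > -1" "1 \<le> B" "B \<le> k"
    and diagonal: "p_next p \<alpha> k k \<ge> 0"
  shows "p_next p \<alpha> k B \<ge> 0"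
proof -
  have k: "1 \<le> k" using assms by simp
  have "real k * p * (1 + \<alpha>) - \<alpha> * (1 - p) * (real B - 1) \<ge> 0"
  proof (cases "\<alpha> \<le> 0")
    case True
    have "real k * p * (1 + \<alpha>) \<ge> 0" using assms by simp
    moreover have "\<alpha> * (1 - p) * (real B - 1) \<le> 0"
      using True assms by (intro mult_nonpos_nonneg) (auto intro: mult_nonpos_nonneg)
    ultimately show ?thesis by linarith
  next
    case False
    then have "\<alpha> * (1 - p) * (real B - 1) \<le> \<alpha> * (1 - p) * (real k - 1)"
      using assms by (intro mult_left_mono) auto
    moreover have "real k * p * (1 + \<alpha>) - \<alpha> * (1 - p) * (real k - 1) \<ge> 0"
      using diagonal p_next_nonneg_iff[OF assms(1-3) k] by simp
    ultimately show ?thesis by linarith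
  qed
  then show ?thesis using p_next_nonneg_iff[OF assms(1-3) k] by simp
qed

lemma p_next_nonneg_everywhere_iff:
  fixes p \<alpha> :: real
  assumes "0 < p" "p < 1" "\<alpha> > -1"
  shows "(\<forall>k B::nat. 1 \<le> k \<longrightarrow> 1 \<le> B \<longrightarrow> B \<le> k \<longrightarrow> p_next p \<alpha> k B \<ge> 0)
    \<longleftrightarrow> 0 \<le> p - \<alpha> * (1 - 2 * p)"
proof -
  have "(\<forall>k B::nat. 1 \<le> k \<longrightarrow> 1 \<le> B \<longrightarrow> B \<le> k \<longrightarrow> p_next p \<alpha> k B \<ge> 0)
      \<longleftrightarrow> (\<forall>n::nat. p_next p \<alpha> (Suc n) (Suc n) \<ge> 0)"
  proof (intro iffI allI impI)
    fix k B :: nat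
    assume diagonal: "\<forall>n. p_next p \<alpha> (Suc n) (Suc n) \<ge> 0"
      and "1 \<le> k" "1 \<le> B" "B \<le> k"
    then obtain n where "k = Suc n" using not0_implies_Suc by fastforce
    then show "p_next p \<alpha> k B \<ge> 0"
      using p_next_nonneg_of_diagonal[OF assms \<open>1 \<le> B\<close> \<open>B \<le> k\<close>] diagonal by blast
  qed simp
  also have "\<dots> \<longleftrightarrow> (\<forall>n::nat. 0 \<le> p * (1 + \<alpha>) + real n * (p - \<alpha> * (1 - 2 * p)))"
    using p_next_diagonal_nonneg_iff[OF assms] by simp
  also have "\<dots> \<longleftrightarrow> 0 \<le> p - \<alpha> * (1 - 2 * p)"
    using assms by (intro affine_nonneg_on_nat_iff) simp
  finally show ?thesis .
qed

theorem lemmaA2: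
  fixes p \<alpha> :: real
  assumes "0 < p" and "p < 1" and "\<alpha> > -1"
  shows "(p \<ge> 1/2 \<longrightarrow>
            (\<forall>k B::nat. 1 \<le> k \<longrightarrow> 1 \<le> B \<longrightarrow> B \<le> k \<longrightarrow> p_next p \<alpha> k B \<ge> 0))
       \<and> (p < 1/2 \<longrightarrow>
            ((\<forall>k B::nat. 1 \<le> k \<longrightarrow> 1 \<le> B \<longrightarrow> B \<le> k \<longrightarrow> p_next p \<alpha> k B \<ge> 0)
             \<longleftrightarrow> \<alpha> \<le> p / (1 - 2 * p)))"
proof -
  note everywhere = p_next_nonneg_everywhere_iff[OF assms]
  have "0 \<le> p - \<alpha> * (1 - 2 * p)" if "p \<ge> 1/2"
  proof (cases "\<alpha> \<le> 0")
    case True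
    have "p - \<alpha> * (1 - 2 * p) = p * (1 + \<alpha>) - \<alpha> * (1 - p)" by (simp add: algebra_simps)
    moreover have "\<alpha> * (1 - p) \<le> 0" using True assms by (simp add: mult_nonpos_nonneg)
    moreover have "p * (1 + \<alpha>) > 0" using assms by simp
    ultimately show ?thesis by linarith
  next
    case False
    then have "\<alpha> * (1 - 2 * p) \<le> 0" using that by (intro mult_nonneg_nonpos) auto
    then show ?thesis using assms by linarith
  qed
  moreover have "0 \<le> p - \<alpha> * (1 - 2 * p) \<longleftrightarrow> \<alpha> \<le> p / (1 - 2 * p)" if "p < 1/2"
    using that by (simp add: pos_le_divide_eq)
  ultimately show ?thesis using everywhere by simp
qed

end
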